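(* Let $\Gamma$ be a labelled graph with no triangle having an edge labelled $2$, and let $\Sigma$ be the Cayley complex of the Coxeter group $W_\Gamma$. Then for any two $2$-cells $\sigma,\tau$ of $\Sigma$ sharing an edge, and any hypergraph $\Lambda_\sigma$ intersecting $\sigma$, there is a hypergraph $\Lambda_\tau$ intersecting $\tau$ that is either disjoint from $\Lambda_\sigma$ or equal to $\Lambda_\sigma$.
   Context: $\Gamma$ is a finite simple graph with each edge labelled by an integer $\ge2$, vertex set $V\Gamma$. The Coxeter group $W_\Gamma$ has presentation $\langle V\Gamma\mid a^2=1\ (a\in V\Gamma),\ p_m(a,b)=p_m(b,a)$ for each edge $ab$ labelled $m\rangle$, where $p_m(a,b)$ is the alternating word $aba\cdots$ of length $m$. Its Cayley complex $\Sigma$ has vertex set $W_\Gamma$, one (undirected) edge $\{w,ws\}$ for each $w\in W_\Gamma$, $s\in V\Gamma$, and for each edge $ab$ of $\Gamma$ labelled $m$ and each coset $w\langle a,b\rangle$ a $2m$-gon $2$-cell glued along the cycle $w,wa,wab,\dots$ of length $2m$. Two edges of a $2m$-gon are opposite if they are at distance $m-1$ along its boundary. A hypergraph is a connected component of the graph whose vertices are the edges of $\Sigma$, with an edge for each $2$-cell and each pair of its opposite edges; it is realised geometrically in $\Sigma$ as the union of the straight segments in $2$-cells joining midpoints of the corresponding opposite edges (these pass through the centre of the cell). A hypergraph intersects a $2$-cell if its realisation meets that cell; disjointness refers to the geometric realisations. *)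

theory Defs
  imports Complex_Main
begin

definition labelled_graph :: "'v set \<Rightarrow> ('v \<Rightarrow> 'v \<Rightarrow> bool) \<Rightarrow> ('v \<Rightarrow> 'v \<Rightarrow> nat) \<Rightarrow> bool" where
  "labelled_graph V E lab \<longleftrightarrow> finite V \<and>
     (\<forall>a b. E a b \<longrightarrow> a \<in> V \<and> b \<in> V \<and> a \<noteq> b \<and> E b a \<and> lab a b = lab b a \<and> lab a b \<ge> 2)"

fun alt :: "'v \<Rightarrow> 'v \<Rightarrow> nat \<Rightarrow> 'v list" where
  "alt a b 0 = []"
| "alt a b (Suc n) = a # alt b a n"

inductive cox_eq :: "'v set \<Rightarrow> ('v \<Rightarrow> 'v \<Rightarrow> bool) \<Rightarrow> ('v \<Rightarrow> 'v \<Rightarrow> nat) \<Rightarrow> 'v list \<Rightarrow> 'v list \<Rightarrow> bool"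
  for V E lab where
  refl: "cox_eq V E lab u u"
| sym: "cox_eq V E lab u v \<Longrightarrow> cox_eq V E lab v u"
| trans: "cox_eq V E lab u v \<Longrightarrow> cox_eq V E lab v w \<Longrightarrow> cox_eq V E lab u w"
| inv: "a \<in> V \<Longrightarrow> cox_eq V E lab (u @ [a, a] @ v) (u @ v)"
| braid: "E a b \<Longrightarrow> cox_eq V E lab (u @ alt a b (lab a b) @ v) (u @ alt b a (lab a b) @ v)"

text \<open>Elements of W_Gamma: equivalence classes of words over V.\<close>
definition cls :: "'v set \<Rightarrow> ('v \<Rightarrow> 'v \<Rightarrow> bool) \<Rightarrow> ('v \<Rightarrow> 'v \<Rightarrow> nat) \<Rightarrow> 'v list \<Rightarrow> 'v list set" where
  "cls V E lab w = {u \<in> lists V. cox_eq V E lab w u}"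

definition sigma_edges :: "'v set \<Rightarrow> ('v \<Rightarrow> 'v \<Rightarrow> bool) \<Rightarrow> ('v \<Rightarrow> 'v \<Rightarrow> nat) \<Rightarrow> 'v list set set set" where
  "sigma_edges V E lab = {{cls V E lab w, cls V E lab (w @ [s])} | w s. w \<in> lists V \<and> s \<in> V}"

text \<open>The 2-cell for the coset w<a,b> (edge ab of Gamma), recorded with its edge {a,b}.\<close>
definition cell_of :: "'v set \<Rightarrow> ('v \<Rightarrow> 'v \<Rightarrow> bool) \<Rightarrow> ('v \<Rightarrow> 'v \<Rightarrow> nat) \<Rightarrow> 'v list \<Rightarrow> 'v \<Rightarrow> 'v
     \<Rightarrow> 'v set \<times> 'v list set set" where
  "cell_of V E lab w a b = ({a, b}, {cls V E lab (w @ u) | u. u \<in> lists {a, b}})"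

definition cells :: "'v set \<Rightarrow> ('v \<Rightarrow> 'v \<Rightarrow> bool) \<Rightarrow> ('v \<Rightarrow> 'v \<Rightarrow> nat) \<Rightarrow> ('v set \<times> 'v list set set) set" where
  "cells V E lab = {cell_of V E lab w a b | w a b. w \<in> lists V \<and> E a b}"

text \<open>The i-th boundary edge of the 2m-gon with boundary cycle w, wa, wab, ...\<close>
definition cedge :: "'v set \<Rightarrow> ('v \<Rightarrow> 'v \<Rightarrow> bool) \<Rightarrow> ('v \<Rightarrow> 'v \<Rightarrow> nat) \<Rightarrow> 'v list \<Rightarrow> 'v \<Rightarrow> 'v \<Rightarrow> nat
     \<Rightarrow> 'v list set set" where
  "cedge V E lab w a b i = {cls V E lab (w @ alt a b i), cls V E lab (w @ alt a b (Suc i))}"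

definition cell_edges :: "'v set \<Rightarrow> ('v \<Rightarrow> 'v \<Rightarrow> bool) \<Rightarrow> ('v \<Rightarrow> 'v \<Rightarrow> nat) \<Rightarrow> 'v set \<times> 'v list set set
     \<Rightarrow> 'v list set set set" where
  "cell_edges V E lab \<sigma> = {cedge V E lab w a b i | w a b i.
      w \<in> lists V \<and> E a b \<and> cell_of V E lab w a b = \<sigma> \<and> i < 2 * lab a b}"

definition opposite :: "'v set \<Rightarrow> ('v \<Rightarrow> 'v \<Rightarrow> bool) \<Rightarrow> ('v \<Rightarrow> 'v \<Rightarrow> nat) \<Rightarrow> 'v set \<times> 'v list set set
     \<Rightarrow> 'v list set set \<Rightarrow> 'v list set set \<Rightarrow> bool" where
  "opposite V E lab \<sigma> e f \<longleftrightarrow> (\<exists>w a b i. w \<in> lists V \<and> E a b \<and> cell_of V E lab w a b = \<sigma>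
      \<and> i < 2 * lab a b \<and> e = cedge V E lab w a b i
      \<and> f = cedge V E lab w a b ((i + lab a b) mod (2 * lab a b)))"

definition hyp_adj :: "'v set \<Rightarrow> ('v \<Rightarrow> 'v \<Rightarrow> bool) \<Rightarrow> ('v \<Rightarrow> 'v \<Rightarrow> nat)
     \<Rightarrow> 'v list set set \<Rightarrow> 'v list set set \<Rightarrow> bool" where
  "hyp_adj V E lab e f \<longleftrightarrow> (\<exists>\<sigma> \<in> cells V E lab. opposite V E lab \<sigma> e f)"

definition hypergraph :: "'v set \<Rightarrow> ('v \<Rightarrow> 'v \<Rightarrow> bool) \<Rightarrow> ('v \<Rightarrow> 'v \<Rightarrow> nat) \<Rightarrow> 'v list set set set \<Rightarrow> bool" where
  "hypergraph V E lab \<Lambda> \<longleftrightarrow> (\<exists>e \<in> sigma_edges V E lab. \<Lambda> = {f. (hyp_adj V E lab)\<^sup>*\<^sup>* e f})"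

text \<open>Points of Sigma relevant to realisations of hypergraphs:
  Mid e = midpoint of edge e; Centre s = centre of cell s;
  Half s e t = point of cell s at parameter t (0<t<1) on the straight segment from the
  midpoint of its boundary edge e to the centre of s.\<close>
datatype ('c, 'e) rpoint = Mid 'e | Centre 'c | Half 'c 'e real

definition segment_pts :: "'c \<Rightarrow> 'e \<Rightarrow> 'e \<Rightarrow> ('c, 'e) rpoint set" where
  "segment_pts \<sigma> e f = {Mid e, Mid f, Centre \<sigma>} \<union> {Half \<sigma> e t | t. 0 < t \<and> t < 1}
      \<union> {Half \<sigma> f t | t. 0 < t \<and> t < 1}"

definition realisation :: "'v set \<Rightarrow> ('v \<Rightarrow> 'v \<Rightarrow> bool) \<Rightarrow> ('v \<Rightarrow> 'v \<Rightarrow> nat) \<Rightarrow> 'v list set set set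
     \<Rightarrow> ('v set \<times> 'v list set set, 'v list set set) rpoint set" where
  "realisation V E lab \<Lambda> = \<Union>{segment_pts \<sigma> e f | \<sigma> e f.
      \<sigma> \<in> cells V E lab \<and> opposite V E lab \<sigma> e f \<and> e \<in> \<Lambda> \<and> f \<in> \<Lambda>}"

definition cell_pts :: "'v set \<Rightarrow> ('v \<Rightarrow> 'v \<Rightarrow> bool) \<Rightarrow> ('v \<Rightarrow> 'v \<Rightarrow> nat) \<Rightarrow> 'v set \<times> 'v list set set
     \<Rightarrow> ('v set \<times> 'v list set set, 'v list set set) rpoint set" where
  "cell_pts V E lab \<sigma> = {Centre \<sigma>} \<union> {Mid e | e. e \<in> cell_edges V E lab \<sigma>}
      \<union> {Half \<sigma> e t | e t. e \<in> cell_edges V E lab \<sigma> \<and> 0 < t \<and> t < 1}"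

definition intersects :: "'v set \<Rightarrow> ('v \<Rightarrow> 'v \<Rightarrow> bool) \<Rightarrow> ('v \<Rightarrow> 'v \<Rightarrow> nat) \<Rightarrow> 'v list set set set
     \<Rightarrow> 'v set \<times> 'v list set set \<Rightarrow> bool" where
  "intersects V E lab \<Lambda> \<sigma> \<longleftrightarrow> realisation V E lab \<Lambda> \<inter> cell_pts V E lab \<sigma> \<noteq> {}"

end

theory Submission
  imports Defs
begin

text \<open>
  Via the Tits representation, every edge of \<open>\<Sigma>\<close> carries a root, determined up to sign, and the
  root is constant (up to sign) along a hypergraph. Two edges of one \<open>2m\<close>-gon have roots whose
  Tits form is \<open>cos (k\<pi>/m)\<close>, of absolute value \<open>1\<close> only for equal or opposite edges. Hence two
  hypergraphs whose roots have Tits form of absolute value at least \<open>1\<close> either coincide or never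
  cross a common \<open>2\<close>-cell, i.e. have disjoint realisations.

  If \<open>\<Lambda>\<^sub>\<sigma>\<close> does not meet \<open>\<tau>\<close> already, write \<open>\<sigma> = w\<langle>s,a\<rangle>\<close> and \<open>\<tau> = w\<langle>s,c\<rangle>\<close> with common edge
  \<open>{w, ws}\<close>. Then \<open>\<Lambda>\<^sub>\<sigma>\<close> crosses \<open>\<sigma>\<close> through an edge with root \<open>w(U\<^sub>k \<alpha>\<^sub>s + U\<^sub>k\<^sub>-\<^sub>1 \<alpha>\<^sub>a)\<close>,
  \<open>0 < k < m\<^sub>s\<^sub>a\<close>, and since the triangle \<open>s, a, c\<close> (if any) has no label \<open>2\<close>, one of the roots
  \<open>w\<alpha>\<^sub>c\<close> and \<open>w(2 cos (\<pi>/m\<^sub>s\<^sub>c) \<alpha>\<^sub>s + \<alpha>\<^sub>c)\<close> of edges of \<open>\<tau>\<close> has Tits form with it at least \<open>1\<close> in absolute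
  value. Its hypergraph is the required \<open>\<Lambda>\<^sub>\<tau>\<close>.
\<close>

text \<open>For \<open>t = \<pi>/m\<close> these are the Chebyshev values \<open>U\<^sub>n\<^sub>-\<^sub>1(cos t)\<close>, the coordinates of the roots of
  the dihedral group of order \<open>2m\<close> in the basis of simple roots.\<close>
definition cheb :: "real \<Rightarrow> nat \<Rightarrow> real" where
  "cheb t n = sin (real n * t) / sin t"

lemma cheb_0 [simp]: "cheb t 0 = 0"
  by (simp add: cheb_def)

lemma cheb_Suc_Suc: "cheb t (Suc (Suc n)) = 2 * cos t * cheb t (Suc n) - cheb t n"
proof -
  have "sin ((real n + 1) * t + t) + sin ((real n + 1) * t - t) = 2 * sin ((real n + 1) * t) * cos t"
    by (simp add: sin_add sin_diff)
  then have "sin (real (Suc (Suc n)) * t) = 2 * cos t * sin (real (Suc n) * t) - sin (real n * t)"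
    by (simp add: algebra_simps)
  then show ?thesis
    unfolding cheb_def by (simp add: diff_divide_distrib)
qed

context
  fixes m :: nat and t :: real
  assumes m: "m \<ge> 2" and t: "t = pi / real m"
begin

lemma angle_pos: "0 < t"
  using m t by simp

lemma angle_le_pi_half: "t \<le> pi / 2"
proof -
  have "pi / real m \<le> pi / 2"
    using m by (intro divide_left_mono) auto
  then show ?thesis
    using t by simp
qed

lemma m_times_angle: "real m * t = pi"
  using m t by simp

lemma sin_angle_pos: "sin t > 0"
  using angle_pos angle_le_pi_half by (intro sin_gt_zero) auto

lemma cos_angle_nonneg: "cos t \<ge> 0"
  using angle_pos angle_le_pi_half by (intro cos_ge_zero) auto

lemma cos_angle_lt_1: "cos t < 1"
  using cos_monotone_0_pi[of 0 t] angle_pos angle_le_pi_half by simp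

lemma cos_angle_ge_half:
  assumes "m \<ge> 3"
  shows "cos t \<ge> 1/2"
proof -
  have "pi / real m \<le> pi / 3"
    using assms by (intro divide_left_mono) auto
  then have "t \<le> pi / 3"
    using t by simp
  then have "cos (pi/3) \<le> cos t"
    using angle_pos by (intro cos_monotone_0_pi_le) auto
  then show ?thesis
    by (simp add: cos_60)
qed

lemma cheb_1 [simp]: "cheb t 1 = 1"
  using sin_angle_pos by (simp add: cheb_def)

lemma cheb_m: "cheb t m = 0"
  using m t by (simp add: cheb_def)

lemma cheb_add_m: "cheb t (n + m) = - cheb t n"
proof -
  have "real (n + m) * t = real n * t + pi"
    using m_times_angle by (simp add: algebra_simps)
  then show ?thesis
    by (simp add: cheb_def)
qed

lemma cheb_m_minus_1: "cheb t (m - 1) = 1"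
proof -
  have "real (m - 1) * t = pi - t"
    using m m_times_angle by (simp add: of_nat_diff algebra_simps)
  then show ?thesis
    using sin_angle_pos by (simp add: cheb_def)
qed

lemma cheb_ge_1:
  assumes "1 \<le> n" and "n \<le> m - 1"
  shows "cheb t n \<ge> 1"
proof -
  have lower: "t \<le> real n * t"
    using assms(1) angle_pos by simp
  have "real n * t \<le> (real m - 1) * t"
    using assms(2) m angle_pos by (intro mult_right_mono) auto
  then have upper: "real n * t \<le> pi - t"
    using m_times_angle by (simp add: algebra_simps)
  have "sin t \<le> sin (real n * t)"
  proof (cases "real n * t \<le> pi / 2")
    case True
    have "- (pi / 2) \<le> t"
      using angle_pos pi_gt_zero by linarith
    then show ?thesis
      using lower True by (intro sin_monotone_2pi_le) auto
  next
    case False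
    then have "sin t \<le> sin (pi - real n * t)"
      using upper angle_pos by (intro sin_monotone_2pi_le) auto
    then show ?thesis
      by simp
  qed
  then show ?thesis
    using sin_angle_pos by (simp add: cheb_def)
qed

lemma cheb_bilinear:
  "cheb t (Suc p) * cheb t (Suc q) + cheb t p * cheb t q
     - cos t * (cheb t (Suc p) * cheb t q + cheb t p * cheb t (Suc q))
   = cos ((real p - real q) * t)"
proof -
  have trig: "sin (x + t) * sin (y + t) + sin x * sin y - cos t * (sin (x + t) * sin y + sin x * sin (y + t))
      = (sin t)\<^sup>2 * cos (x - y)" for x y
  proof -
    have "cos t * cos t + sin t * sin t = 1"
      using sin_cos_squared_add[of t] by (simp add: power2_eq_square)
    then show ?thesis
      unfolding sin_add cos_diff power2_eq_square by algebra
  qed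
  show ?thesis
    using trig[of "real p * t" "real q * t"] sin_angle_pos unfolding cheb_def
    by (simp add: field_simps power2_eq_square distrib_right)
qed

end

lemma cos_multiple_abs_ge_1:
  fixes m p q :: nat
  assumes m: "m \<ge> 2" and p: "p < 2 * m" and q: "q < 2 * m"
    and c: "\<bar>cos ((real p - real q) * (pi / real m))\<bar> \<ge> 1"
  shows "q = p \<or> q = (p + m) mod (2 * m)"
proof -
  define z where "z = (real p - real q) * (pi / real m)"
  have "\<bar>cos z\<bar> = 1"
    using abs_cos_le_one[of z] c unfolding z_def by linarith
  then have "(cos z)\<^sup>2 = 1"
    by (metis abs_power2 power2_abs power_one)
  then have "sin z = 0"
    using sin_cos_squared_add[of z] by simp
  then obtain n :: int where n: "z = of_int n * pi"
    using sin_zero_iff_int2 by auto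
  have "(real p - real q) * pi = of_int n * pi * real m"
    using n m unfolding z_def by (simp add: field_simps)
  then have "real p - real q = of_int n * real m"
    by simp
  then have e: "int p - int q = n * int m"
    by (metis of_int_eq_iff of_int_diff of_int_mult of_int_of_nat_eq)
  have "n * int m < 2 * int m" and "(-2) * int m < n * int m"
    using e p q by linarith+
  then have "n < 2" and "n > -2"
    using m mult_less_cancel_right[of n "int m" 2] mult_less_cancel_right[of "-2" "int m" n] by auto
  then have "n = -1 \<or> n = 0 \<or> n = 1"
    by linarith
  then show ?thesis
  proof (elim disjE)
    assume "n = -1"
    then show ?thesis
      using e q by simp
  next
    assume "n = 0"
    then show ?thesis
      using e by simp
  next
    assume "n = 1"
    then have "p = q + m"
      using e by simp
    then show ?thesis
      using q by (simp add: mod_if mult_2)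
  qed
qed

lemma cox_eq_append: "cox_eq V E lab u v \<Longrightarrow> cox_eq V E lab (p @ u @ q) (p @ v @ q)"
proof (induction rule: cox_eq.induct)
  case (inv a u v)
  then show ?case
    using cox_eq.inv[where u="p @ u" and v="v @ q"] by simp
next
  case (braid a b u v)
  then show ?case
    using cox_eq.braid[where u="p @ u" and v="v @ q"] by simp
qed (metis cox_eq.refl cox_eq.sym cox_eq.trans)+

lemma cox_eq_append_right: "cox_eq V E lab u v \<Longrightarrow> cox_eq V E lab (u @ q) (v @ q)"
  using cox_eq_append[of V E lab u v "[]" q] by simp

lemma cox_eq_append_left: "cox_eq V E lab u v \<Longrightarrow> cox_eq V E lab (p @ u) (p @ v)"
  using cox_eq_append[of V E lab u v p "[]"] by simp

lemma cox_eq_rev_cancel: "u \<in> lists V \<Longrightarrow> cox_eq V E lab (u @ rev u) []"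
proof (induction u)
  case Nil
  then show ?case
    by (simp add: cox_eq.refl)
next
  case (Cons a u)
  have "cox_eq V E lab ([a] @ (u @ rev u) @ [a]) ([a] @ [] @ [a])"
    using cox_eq_append[of V E lab "u @ rev u" "[]" "[a]" "[a]"] Cons by auto
  moreover have "cox_eq V E lab ([] @ [a, a] @ []) ([] @ [])"
    using Cons by (intro cox_eq.inv) auto
  ultimately show ?case
    using cox_eq.trans by fastforce
qed

lemma cls_eq_iff:
  "x \<in> lists V \<Longrightarrow> y \<in> lists V \<Longrightarrow> cls V E lab x = cls V E lab y \<longleftrightarrow> cox_eq V E lab x y"
proof
  assume "x \<in> lists V" and "cls V E lab x = cls V E lab y"
  then have "x \<in> cls V E lab y"
    unfolding cls_def using cox_eq.refl by blast
  then show "cox_eq V E lab x y"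
    unfolding cls_def by (auto intro: cox_eq.sym)
next
  assume "cox_eq V E lab x y"
  then show "cls V E lab x = cls V E lab y"
    unfolding cls_def by (auto intro: cox_eq.trans cox_eq.sym)
qed

definition alt_letter :: "'v \<Rightarrow> 'v \<Rightarrow> nat \<Rightarrow> 'v" where
  "alt_letter a b n = (if even n then a else b)"

lemma alt_letter_in: "alt_letter a b n \<in> {a, b}"
  by (simp add: alt_letter_def)

lemma alt_Suc_snoc: "alt a b (Suc n) = alt a b n @ [alt_letter a b n]"
  by (induction n arbitrary: a b) (auto simp: alt_letter_def)

lemma alt_add: "alt a b (n + k) = alt a b n @ alt (alt_letter a b n) (alt_letter b a n) k"
  by (induction n arbitrary: a b) (auto simp: alt_letter_def)

lemma alt_in_lists: "alt a b n \<in> lists {a, b}"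
  by (induction n arbitrary: a b) auto

lemma rev_alt: "rev (alt a b n) = (if even n then alt b a n else alt a b n)"
proof (induction n arbitrary: a b)
  case (Suc n)
  then show ?case
    using alt_Suc_snoc[of a b n] alt_Suc_snoc[of b a n] by (auto simp: alt_letter_def)
qed simp

locale coxeter_graph =
  fixes V :: "'v set" and E :: "'v \<Rightarrow> 'v \<Rightarrow> bool" and lab :: "'v \<Rightarrow> 'v \<Rightarrow> nat"
  assumes labelled_graph: "labelled_graph V E lab"
begin

lemma finite_V: "finite V"
  using labelled_graph unfolding labelled_graph_def by auto

lemma E_sym: "E a b \<Longrightarrow> E b a"
  using labelled_graph unfolding labelled_graph_def by auto

lemma E_in_V: "E a b \<Longrightarrow> a \<in> V \<and> b \<in> V"
  using labelled_graph unfolding labelled_graph_def by auto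

lemma E_neq: "E a b \<Longrightarrow> a \<noteq> b"
  using labelled_graph unfolding labelled_graph_def by auto

lemma lab_sym: "E a b \<Longrightarrow> lab b a = lab a b"
  using labelled_graph unfolding labelled_graph_def by metis

lemma lab_ge_2: "E a b \<Longrightarrow> lab a b \<ge> 2"
  using labelled_graph unfolding labelled_graph_def by auto

lemma alt_in_lists_V: "E a b \<Longrightarrow> alt a b n \<in> lists V"
  using alt_in_lists[of a b n] E_in_V[of a b] by auto

subsection \<open>The Tits representation\<close>

definition theta :: "'v \<Rightarrow> 'v \<Rightarrow> real" where
  "theta a b = pi / real (lab a b)"

text \<open>The Gram matrix \<open>-cos (\<pi>/m\<^sub>x\<^sub>y)\<close> of the simple roots, with \<open>-1\<close> for non-adjacent vertices
  (\<open>m = \<infinity>\<close>).\<close>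
definition form_coeff :: "'v \<Rightarrow> 'v \<Rightarrow> real" where
  "form_coeff x y = (if x = y then 1 else if E x y then - cos (theta x y) else -1)"

definition tits_form :: "('v \<Rightarrow> real) \<Rightarrow> ('v \<Rightarrow> real) \<Rightarrow> real" where
  "tits_form u v = (\<Sum>x\<in>V. \<Sum>y\<in>V. u x * form_coeff x y * v y)"

definition simple_root :: "'v \<Rightarrow> 'v \<Rightarrow> real" where
  "simple_root s = (\<lambda>x. if x = s then 1 else 0)"

definition reflect :: "'v \<Rightarrow> ('v \<Rightarrow> real) \<Rightarrow> ('v \<Rightarrow> real)" where
  "reflect s v = (\<lambda>x. v x - 2 * tits_form (simple_root s) v * simple_root s x)"

primrec act :: "'v list \<Rightarrow> ('v \<Rightarrow> real) \<Rightarrow> ('v \<Rightarrow> real)" where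
  "act [] v = v"
| "act (s # w) v = reflect s (act w v)"

lemma theta_sym: "E a b \<Longrightarrow> theta b a = theta a b"
  unfolding theta_def using lab_sym by simp

lemma theta_props: "E a b \<Longrightarrow> lab a b \<ge> 2 \<and> theta a b = pi / real (lab a b)"
  using lab_ge_2 theta_def by auto

lemma form_coeff_sym: "form_coeff x y = form_coeff y x"
  unfolding form_coeff_def using E_sym theta_sym by auto

lemma form_coeff_self: "form_coeff s s = 1"
  unfolding form_coeff_def by simp

lemma form_coeff_edge: "E a b \<Longrightarrow> form_coeff a b = - cos (theta a b)"
  unfolding form_coeff_def using E_neq by auto

lemma tits_form_sym: "tits_form u v = tits_form v u"
  unfolding tits_form_def
  by (subst sum.swap) (simp add: form_coeff_sym mult.commute mult.left_commute)

lemma tits_form_linear_left: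
  "tits_form (\<lambda>x. a * u x + b * v x) w = a * tits_form u w + b * tits_form v w"
  unfolding tits_form_def by (simp add: algebra_simps sum.distrib sum_distrib_left)

lemma tits_form_linear_right:
  "tits_form w (\<lambda>x. a * u x + b * v x) = a * tits_form w u + b * tits_form w v"
  using tits_form_linear_left[of a u b v w] by (simp add: tits_form_sym)

lemma tits_form_neg_left: "tits_form (\<lambda>x. - u x) w = - tits_form u w"
  using tits_form_linear_left[of "-1" u 0 u w] by simp

lemma tits_form_neg_right: "tits_form w (\<lambda>x. - u x) = - tits_form w u"
  using tits_form_neg_left[of u w] by (simp add: tits_form_sym)

lemma tits_form_diff_right:
  "tits_form w (\<lambda>x. u x - c * v x) = tits_form w u - c * tits_form w v"
  unfolding tits_form_def by (simp add: algebra_simps sum_subtractf sum_distrib_left)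

lemma tits_form_simple_root_left:
  assumes "s \<in> V"
  shows "tits_form (simple_root s) v = (\<Sum>y\<in>V. form_coeff s y * v y)"
proof -
  have "tits_form (simple_root s) v = (\<Sum>x\<in>V. if x = s then (\<Sum>y\<in>V. form_coeff s y * v y) else 0)"
    unfolding tits_form_def by (rule sum.cong) (auto simp: simple_root_def)
  then show ?thesis
    using assms finite_V by simp
qed

lemma tits_form_simple_roots:
  assumes "s \<in> V" and "t \<in> V"
  shows "tits_form (simple_root s) (simple_root t) = form_coeff s t"
proof -
  have "tits_form (simple_root s) (simple_root t) = (\<Sum>y\<in>V. if y = t then form_coeff s t else 0)"
    unfolding tits_form_simple_root_left[OF assms(1)] by (rule sum.cong) (auto simp: simple_root_def)
  then show ?thesis
    using assms(2) finite_V by simp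
qed

lemma reflect_linear:
  "reflect s (\<lambda>x. a * u x + b * v x) = (\<lambda>x. a * reflect s u x + b * reflect s v x)"
  unfolding reflect_def by (rule ext) (simp add: tits_form_linear_right algebra_simps)

lemma tits_form_reflect_right:
  "tits_form w (reflect s v) = tits_form w v - 2 * tits_form (simple_root s) v * tits_form w (simple_root s)"
  unfolding reflect_def using tits_form_diff_right[of w v "2 * tits_form (simple_root s) v"]
  by (simp add: mult.assoc)

lemma tits_form_reflect_left:
  "tits_form (reflect s v) w = tits_form v w - 2 * tits_form (simple_root s) v * tits_form (simple_root s) w"
  using tits_form_reflect_right[of w s v] by (simp add: tits_form_sym)

lemma reflect_simple_root_self: "s \<in> V \<Longrightarrow> reflect s (simple_root s) = (\<lambda>x. - simple_root s x)"
  unfolding reflect_def by (rule ext) (simp add: tits_form_simple_roots form_coeff_self)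

lemma reflect_simple_root:
  "s \<in> V \<Longrightarrow> t \<in> V
    \<Longrightarrow> reflect s (simple_root t) = (\<lambda>x. simple_root t x - 2 * form_coeff s t * simple_root s x)"
  unfolding reflect_def by (rule ext) (simp add: tits_form_simple_roots)

lemma reflect_reflect:
  assumes "s \<in> V"
  shows "reflect s (reflect s v) = v"
proof -
  have "tits_form (simple_root s) (reflect s v) = - tits_form (simple_root s) v"
    using assms by (simp add: tits_form_reflect_right tits_form_simple_roots form_coeff_self)
  then show ?thesis
    unfolding reflect_def[of s "reflect s v"] by (rule_tac ext) (simp add: reflect_def)
qed

lemma tits_form_reflect:
  assumes "s \<in> V"
  shows "tits_form (reflect s u) (reflect s v) = tits_form u v"
proof -
  have "tits_form (simple_root s) (simple_root s) = 1"
    using assms by (simp add: tits_form_simple_roots form_coeff_self)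
  then show ?thesis
    by (simp add: tits_form_reflect_left tits_form_reflect_right tits_form_sym[of "simple_root s" u]
        tits_form_sym[of v "simple_root s"] algebra_simps)
qed

lemma act_append: "act (u @ w) v = act u (act w v)"
  by (induction u) auto

lemma act_linear: "act g (\<lambda>x. a * u x + b * v x) = (\<lambda>x. a * act g u x + b * act g v x)"
  by (induction g) (auto simp: reflect_linear)

lemma act_neg: "act g (\<lambda>x. - u x) = (\<lambda>x. - act g u x)"
  using act_linear[of g "-1" u 0 u] by simp

lemma tits_form_act: "g \<in> lists V \<Longrightarrow> tits_form (act g u) (act g v) = tits_form u v"
  by (induction g) (auto simp: tits_form_reflect)

text \<open>The root of the \<open>k\<close>-th edge of the \<open>2m\<close>-gon based at the identity with generators \<open>a, b\<close>.\<close>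
definition dihedral_root :: "'v \<Rightarrow> 'v \<Rightarrow> nat \<Rightarrow> 'v \<Rightarrow> real" where
  "dihedral_root a b k =
     (\<lambda>x. cheb (theta a b) (Suc k) * simple_root a x + cheb (theta a b) k * simple_root b x)"

lemma act_alt_simple_root:
  "E a b \<Longrightarrow> act (alt a b k) (simple_root (alt_letter a b k)) = dihedral_root a b k"
proof (induction k arbitrary: a b)
  case 0
  then have "cheb (theta a b) 1 = 1"
    using theta_props cheb_1 by blast
  then show ?case
    by (simp add: dihedral_root_def alt_letter_def)
next
  case (Suc k)
  have ab: "a \<in> V" "b \<in> V"
    using E_in_V Suc.prems by auto
  have "alt_letter a b (Suc k) = alt_letter b a k"
    by (simp add: alt_letter_def)
  then have "act (alt a b (Suc k)) (simple_root (alt_letter a b (Suc k))) = reflect a (dihedral_root b a k)"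
    using Suc.IH[of b a] E_sym[OF Suc.prems] by simp
  also have "\<dots> = dihedral_root a b (Suc k)"
    unfolding dihedral_root_def theta_sym[OF Suc.prems] reflect_linear reflect_simple_root_self[OF ab(1)]
      reflect_simple_root[OF ab] form_coeff_edge[OF Suc.prems] cheb_Suc_Suc
    by (rule ext) (simp add: algebra_simps)
  finally show ?case .
qed

lemma act_fix:
  "w \<in> lists {a, b} \<Longrightarrow> tits_form (simple_root a) v = 0 \<Longrightarrow> tits_form (simple_root b) v = 0
    \<Longrightarrow> act w v = v"
  by (induction w) (auto simp: reflect_def)

text \<open>Words in \<open>a, b\<close> act trivially on the \<open>B\<close>-orthogonal complement of \<open>\<alpha>\<^sub>a, \<alpha>\<^sub>b\<close>, which is a
  complement of their span because \<open>cos (\<pi>/m\<^sub>a\<^sub>b) < 1\<close>.\<close>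
lemma act_eq_on_dihedral:
  assumes Eab: "E a b" and w1: "w1 \<in> lists {a, b}" and w2: "w2 \<in> lists {a, b}"
    and eq_a: "act w1 (simple_root a) = act w2 (simple_root a)"
    and eq_b: "act w1 (simple_root b) = act w2 (simple_root b)"
  shows "act w1 = act w2"
proof
  fix v
  have ab: "a \<in> V" "b \<in> V"
    using E_in_V Eab by auto
  define c where "c = cos (theta a b)"
  have "c < 1" "c \<ge> 0"
    unfolding c_def using theta_props[OF Eab] cos_angle_lt_1 cos_angle_nonneg by auto
  then have det: "1 - c * c > 0"
    by (smt (verit) mult_left_le)
  have cab: "form_coeff a b = - c" "form_coeff b a = - c"
    using form_coeff_edge[OF Eab] form_coeff_sym c_def by auto
  define x where "x = tits_form (simple_root a) v"
  define y where "y = tits_form (simple_root b) v"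
  define p where "p = (x + c * y) / (1 - c * c)"
  define q where "q = (y + c * x) / (1 - c * c)"
  define v0 where "v0 = (\<lambda>z. v z - p * simple_root a z - q * simple_root b z)"
  have "tits_form (simple_root a) v0 = x - p * form_coeff a a - q * form_coeff a b"
    unfolding v0_def x_def using ab by (simp add: tits_form_diff_right tits_form_simple_roots)
  then have orth_a: "tits_form (simple_root a) v0 = 0"
    using det unfolding p_def q_def cab form_coeff_self by (simp add: field_simps)
  have "tits_form (simple_root b) v0 = y - p * form_coeff b a - q * form_coeff b b"
    unfolding v0_def y_def using ab by (simp add: tits_form_diff_right tits_form_simple_roots)
  then have orth_b: "tits_form (simple_root b) v0 = 0"
    using det unfolding p_def q_def cab form_coeff_self by (simp add: field_simps)
  have "act w v = (\<lambda>z. v0 z + p * act w (simple_root a) z + q * act w (simple_root b) z)"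
    if "w \<in> lists {a, b}" for w
  proof -
    have "act w v = act w (\<lambda>z. 1 * (\<lambda>z. 1 * v0 z + p * simple_root a z) z + q * simple_root b z)"
      unfolding v0_def by simp
    also have "\<dots> = (\<lambda>z. act w v0 z + p * act w (simple_root a) z + q * act w (simple_root b) z)"
      unfolding act_linear by simp
    finally show ?thesis
      using act_fix[OF that orth_a orth_b] by simp
  qed
  then show "act w1 v = act w2 v"
    using w1 w2 eq_a eq_b by simp
qed

lemma act_alt_lab:
  assumes Eab: "E a b"
  shows "act (alt a b (lab a b)) (simple_root (alt_letter a b (lab a b))) = (\<lambda>x. - simple_root a x)"
    and "act (alt a b (lab a b)) (simple_root (alt_letter b a (lab a b))) = (\<lambda>x. - simple_root b x)"
proof -
  define m where "m = lab a b"
  have m: "m \<ge> 2" and t: "theta a b = pi / real m"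
    using theta_props[OF Eab] m_def by auto
  have ab: "a \<in> V" "b \<in> V"
    using E_in_V Eab by auto
  have m_Suc: "Suc (m - 1) = m"
    using m by simp
  have cheb_values: "cheb (theta a b) m = 0" "cheb (theta a b) (Suc m) = -1"
    "cheb (theta a b) (m - 1) = 1"
    using cheb_m[OF m t] cheb_add_m[OF m t, of 1] cheb_1[OF m t] cheb_m_minus_1[OF m t] by simp_all
  show "act (alt a b m) (simple_root (alt_letter a b m)) = (\<lambda>x. - simple_root a x)"
    using act_alt_simple_root[OF Eab, of m] cheb_values by (simp add: dihedral_root_def)
  let ?s = "alt_letter a b (m - 1)"
  have "alt_letter b a m = ?s"
    using m_Suc by (metis alt_letter_def even_Suc)
  then have "act (alt a b m) (simple_root (alt_letter b a m)) = act (alt a b (m - 1)) (reflect ?s (simple_root ?s))"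
    using alt_Suc_snoc[of a b "m - 1"] m_Suc by (simp add: act_append)
  also have "\<dots> = (\<lambda>x. - dihedral_root a b (m - 1) x)"
  proof -
    have "?s \<in> V"
      using alt_letter_in[of a b "m - 1"] ab by auto
    then show ?thesis
      using reflect_simple_root_self act_alt_simple_root[OF Eab] by (simp add: act_neg)
  qed
  also have "\<dots> = (\<lambda>x. - simple_root b x)"
    unfolding dihedral_root_def using cheb_values m_Suc by simp
  finally show "act (alt a b m) (simple_root (alt_letter b a m)) = (\<lambda>x. - simple_root b x)" .
qed

lemma act_braid:
  assumes Eab: "E a b"
  shows "act (alt a b (lab a b)) = act (alt b a (lab a b))"
proof (rule act_eq_on_dihedral[OF Eab alt_in_lists])
  show "alt b a (lab a b) \<in> lists {a, b}"
    using alt_in_lists[of b a] by (simp add: insert_commute)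
  have ba: "E b a" "lab b a = lab a b"
    using E_sym lab_sym Eab by auto
  have "alt_letter a b n = a \<and> alt_letter b a n = b \<or> alt_letter a b n = b \<and> alt_letter b a n = a" for n
    unfolding alt_letter_def by auto
  then show "act (alt a b (lab a b)) (simple_root a) = act (alt b a (lab a b)) (simple_root a)"
    and "act (alt a b (lab a b)) (simple_root b) = act (alt b a (lab a b)) (simple_root b)"
    using act_alt_lab[OF Eab] act_alt_lab[OF ba(1)] ba(2) by (metis (no_types))+
qed

lemma act_cox_eq: "cox_eq V E lab u v \<Longrightarrow> act u = act v"
proof (induction rule: cox_eq.induct)
  case (inv a u v)
  then show ?case
    by (simp add: fun_eq_iff act_append reflect_reflect)
next
  case (braid a b u v)
  show ?case
    by (rule ext) (simp add: act_append act_braid[OF braid])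
qed auto

lemma act_rev_act: "g \<in> lists V \<Longrightarrow> act (rev g) (act g v) = v"
  by (induction g arbitrary: v) (auto simp: act_append reflect_reflect)

lemma act_inject: "g \<in> lists V \<Longrightarrow> act g u = act g v \<Longrightarrow> u = v"
  by (metis act_rev_act)

lemma reflect_inject:
  assumes "s \<in> V" and "t \<in> V" and "reflect s = reflect t"
  shows "s = t"
proof (rule ccontr)
  assume "s \<noteq> t"
  then have "reflect s (simple_root t) t = 1"
    by (simp add: reflect_def simple_root_def)
  moreover have "reflect t (simple_root t) t = -1"
    unfolding reflect_simple_root_self[OF assms(2)] by (simp add: simple_root_def)
  ultimately show False
    using assms(3) by simp
qed

lemma snoc_generator_unique:
  assumes "g \<in> lists V" and "s \<in> V" and "t \<in> V"
    and "act g = act h" and "act (g @ [s]) = act (h @ [t])"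
  shows "s = t"
proof -
  have "act g (reflect s v) = act g (reflect t v)" for v
    using fun_cong[OF assms(5), of v] unfolding act_append assms(4) by simp
  then have "reflect s = reflect t"
    using act_inject[OF assms(1)] by blast
  then show ?thesis
    using reflect_inject assms(2,3) by blast
qed

lemma sigma_edge_eqD:
  assumes g: "g \<in> lists V" and h: "h \<in> lists V" and s: "s \<in> V" and t: "t \<in> V"
    and eq: "{cls V E lab g, cls V E lab (g @ [s])} = {cls V E lab h, cls V E lab (h @ [t])}"
  shows "s = t \<and> (cox_eq V E lab g h \<or> cox_eq V E lab g (h @ [t]))"
proof -
  have gs: "g @ [s] \<in> lists V" and ht: "h @ [t] \<in> lists V" and htt: "h @ [t, t] \<in> lists V"
    using g h s t by auto
  have htt_h: "act (h @ [t, t]) = act h"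
    using act_cox_eq[OF cox_eq.inv[of t V E lab h "[]"]] t by simp
  from eq consider "cox_eq V E lab g h" "cox_eq V E lab (g @ [s]) (h @ [t])"
    | "cox_eq V E lab g (h @ [t])" "cox_eq V E lab (g @ [s]) h"
    using cls_eq_iff[OF g h] cls_eq_iff[OF gs ht] cls_eq_iff[OF g ht] cls_eq_iff[OF gs h]
    by (auto simp: doubleton_eq_iff)
  then show ?thesis
  proof cases
    case 1
    then show ?thesis
      using snoc_generator_unique[OF g s t] act_cox_eq by blast
  next
    case 2
    then have "act g = act (h @ [t])" and "act (g @ [s]) = act ((h @ [t]) @ [t])"
      using act_cox_eq htt_h by auto
    then show ?thesis
      using snoc_generator_unique[OF g s t] 2(1) by blast
  qed
qed

subsection \<open>Roots of edges\<close>

definition edge_roots :: "'v list set set \<Rightarrow> ('v \<Rightarrow> real) set" where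
  "edge_roots e = {act g (simple_root t) | g t.
     g \<in> lists V \<and> t \<in> V \<and> e = {cls V E lab g, cls V E lab (g @ [t])}}"

definition eq_up_to_sign :: "('v \<Rightarrow> real) \<Rightarrow> ('v \<Rightarrow> real) \<Rightarrow> bool" where
  "eq_up_to_sign b c \<longleftrightarrow> c = b \<or> c = (\<lambda>x. - b x)"

lemma eq_up_to_sign_trans: "eq_up_to_sign b c \<Longrightarrow> eq_up_to_sign c d \<Longrightarrow> eq_up_to_sign b d"
  by (auto simp: eq_up_to_sign_def)

lemma eq_up_to_sign_act: "eq_up_to_sign b c \<Longrightarrow> eq_up_to_sign (act g b) (act g c)"
  by (auto simp: eq_up_to_sign_def act_neg)

lemma eq_up_to_sign_tits_form_abs:
  "eq_up_to_sign b b' \<Longrightarrow> eq_up_to_sign c c' \<Longrightarrow> \<bar>tits_form b' c'\<bar> = \<bar>tits_form b c\<bar>"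
  by (auto simp: eq_up_to_sign_def tits_form_neg_left tits_form_neg_right)

lemma edge_roots_eq_up_to_sign:
  assumes "b \<in> edge_roots e" and "c \<in> edge_roots e"
  shows "eq_up_to_sign b c"
proof -
  obtain g s h t where g: "g \<in> lists V" and s: "s \<in> V" and b: "b = act g (simple_root s)"
    and h: "h \<in> lists V" and t: "t \<in> V" and c: "c = act h (simple_root t)"
    and "e = {cls V E lab g, cls V E lab (g @ [s])}" and "e = {cls V E lab h, cls V E lab (h @ [t])}"
    using assms unfolding edge_roots_def mem_Collect_eq by metis
  then have st: "s = t" and "cox_eq V E lab g h \<or> cox_eq V E lab g (h @ [t])"
    using sigma_edge_eqD[OF g h s t] by auto
  then consider "act g = act h" | "act g = act (h @ [t])"
    using act_cox_eq by blast
  then show ?thesis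
  proof cases
    case 2
    then have "b = act h (\<lambda>x. - simple_root t x)"
      using b st t by (simp add: act_append reflect_simple_root_self)
    then show ?thesis
      using c by (simp add: eq_up_to_sign_def act_neg)
  qed (simp add: b c st eq_up_to_sign_def)
qed

subsection \<open>Edges of a \<open>2\<close>-cell\<close>

lemma cls_append_cong:
  "W \<in> lists V \<Longrightarrow> x \<in> lists V \<Longrightarrow> y \<in> lists V \<Longrightarrow> cox_eq V E lab x y
    \<Longrightarrow> cls V E lab (W @ x) = cls V E lab (W @ y)"
  by (simp add: cls_eq_iff cox_eq_append_left)

lemma cox_eq_alt_double_lab: "E a b \<Longrightarrow> cox_eq V E lab (alt a b (2 * lab a b)) []"
proof -
  assume Eab: "E a b"
  define m where "m = lab a b"
  have "alt a b (2 * m) = alt a b m @ rev (alt b a m)"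
    using alt_add[of a b m m] rev_alt[of b a m] by (simp add: alt_letter_def mult_2)
  moreover have "cox_eq V E lab (alt a b m) (alt b a m)"
    using cox_eq.braid[where u="[]" and v="[]" and a=a and b=b and V=V and E=E and lab=lab] Eab m_def
    by simp
  then have "cox_eq V E lab (alt a b m @ rev (alt b a m)) (alt b a m @ rev (alt b a m))"
    by (rule cox_eq_append_right)
  moreover have "cox_eq V E lab (alt b a m @ rev (alt b a m)) []"
    using cox_eq_rev_cancel[OF alt_in_lists_V[OF E_sym[OF Eab]]] .
  ultimately show ?thesis
    using cox_eq.trans m_def by metis
qed

lemma cox_eq_alt_mod: "E a b \<Longrightarrow> cox_eq V E lab (alt a b n) (alt a b (n mod (2 * lab a b)))"
proof (induction n rule: less_induct)
  case (less n)
  show ?case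
  proof (cases "n < 2 * lab a b")
    case True
    then show ?thesis
      by (simp add: cox_eq.refl)
  next
    case False
    define p where "p = n - 2 * lab a b"
    have "alt a b n = alt a b (2 * lab a b) @ alt a b p"
      using False alt_add[of a b "2 * lab a b" p] unfolding p_def by (simp add: alt_letter_def)
    then have "cox_eq V E lab (alt a b n) (alt a b p)"
      using cox_eq_append_right[OF cox_eq_alt_double_lab[OF less.prems]] by simp
    moreover have "p < n" and "p mod (2 * lab a b) = n mod (2 * lab a b)"
      using False lab_ge_2[OF less.prems] unfolding p_def by (auto simp: le_mod_geq)
    ultimately show ?thesis
      using less cox_eq.trans by metis
  qed
qed

lemma cedge_mod:
  assumes W: "W \<in> lists V" and Eab: "E a b"
  shows "cedge V E lab W a b (j mod (2 * lab a b)) = cedge V E lab W a b j"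
proof -
  have per: "cls V E lab (W @ alt a b (n mod (2 * lab a b))) = cls V E lab (W @ alt a b n)" for n
    using cls_append_cong[OF W alt_in_lists_V[OF Eab] alt_in_lists_V[OF Eab] cox_eq_alt_mod[OF Eab]]
    by metis
  have "Suc j mod (2 * lab a b) = Suc (j mod (2 * lab a b)) mod (2 * lab a b)"
    by (simp add: mod_Suc_eq)
  then show ?thesis
    unfolding cedge_def using per[of j] per[of "Suc j"] per[of "Suc (j mod (2 * lab a b))"] by simp
qed

text \<open>Appending a generator to \<open>alt a b k\<close> moves one step along the boundary of the \<open>2m\<close>-gon,
  forwards or (using \<open>alt a b (k + 2m) \<equiv> alt a b k\<close>) backwards.\<close>
lemma alt_snoc_cox_eq:
  assumes Eab: "E a b" and t: "t \<in> {a, b}"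
  obtains j where "cox_eq V E lab (alt a b k) (alt a b j)" "cox_eq V E lab (alt a b k @ [t]) (alt a b (Suc j))"
    | j where "cox_eq V E lab (alt a b k) (alt a b (Suc j))" "cox_eq V E lab (alt a b k @ [t]) (alt a b j)"
proof (cases "t = alt_letter a b k")
  case True
  then have "alt a b k @ [t] = alt a b (Suc k)"
    by (simp only: alt_Suc_snoc)
  then show ?thesis
    using that(1)[of k] cox_eq.refl by metis
next
  case False
  define j where "j = k + 2 * lab a b - 1"
  have Suc_j: "Suc j = k + 2 * lab a b"
    using lab_ge_2[OF Eab] unfolding j_def by simp
  have "alt_letter a b (Suc j) = alt_letter a b k"
    unfolding Suc_j alt_letter_def by simp
  then have tj: "t = alt_letter a b j"
    using False t E_neq[OF Eab] by (auto simp: alt_letter_def split: if_splits)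
  have "Suc j mod (2 * lab a b) = k mod (2 * lab a b)"
    unfolding Suc_j by simp
  then have per: "cox_eq V E lab (alt a b (Suc j)) (alt a b k)"
    using cox_eq_alt_mod[OF Eab, of "Suc j"] cox_eq_alt_mod[OF Eab, of k]
    by (auto intro: cox_eq.trans cox_eq.sym)
  have "cox_eq V E lab (alt a b j @ [t, t] @ []) (alt a b j @ [])"
    using t E_in_V[OF Eab] by (intro cox_eq.inv) auto
  then have "cox_eq V E lab (alt a b (Suc j) @ [t]) (alt a b j)"
    unfolding alt_Suc_snoc tj by simp
  then have "cox_eq V E lab (alt a b k @ [t]) (alt a b j)"
    using cox_eq_append_right[OF cox_eq.sym[OF per]] cox_eq.trans by blast
  then show ?thesis
    using that(2)[of j] cox_eq.sym[OF per] by blast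
qed

lemma dihedral_normal_form:
  assumes Eab: "E a b"
  shows "x \<in> lists {a, b} \<Longrightarrow> \<exists>k. cox_eq V E lab x (alt a b k)"
proof (induction x rule: rev_induct)
  case Nil
  have "cox_eq V E lab [] (alt a b 0)"
    by (simp add: cox_eq.refl)
  then show ?case ..
next
  case (snoc t x)
  then obtain k where k: "cox_eq V E lab x (alt a b k)"
    by auto
  then have xt: "cox_eq V E lab (x @ [t]) (alt a b k @ [t])"
    by (rule cox_eq_append_right)
  have "t \<in> {a, b}"
    using snoc.prems by auto
  then show ?case
    by (rule alt_snoc_cox_eq[OF Eab _, of t k]) (blast intro: cox_eq.trans[OF xt])+
qed

lemma coset_edge_cedge:
  assumes W: "W \<in> lists V" and Eab: "E a b" and x: "x \<in> lists {a, b}" and t: "t \<in> {a, b}"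
  shows "\<exists>j < 2 * lab a b. {cls V E lab (W @ x), cls V E lab (W @ x @ [t])} = cedge V E lab W a b j"
proof -
  have ab: "a \<in> V" "b \<in> V"
    using E_in_V Eab by auto
  have cong: "cls V E lab (W @ u) = cls V E lab (W @ v)"
    if "cox_eq V E lab u v" "u \<in> lists {a, b}" "v \<in> lists {a, b}" for u v
  proof (rule cls_append_cong[OF W _ _ that(1)])
    show "u \<in> lists V" "v \<in> lists V"
      using that(2,3) ab by auto
  qed
  obtain k where k: "cox_eq V E lab x (alt a b k)"
    using dihedral_normal_form[OF Eab x] by blast
  have in_ab: "alt a b n \<in> lists {a, b}" "alt a b n @ [t] \<in> lists {a, b}" for n
    using alt_in_lists[of a b n] t by auto
  have "{cls V E lab (W @ x), cls V E lab (W @ x @ [t])}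
      = {cls V E lab (W @ alt a b k), cls V E lab (W @ alt a b k @ [t])}"
    using cong[OF k x] cong[OF cox_eq_append_right[OF k]] x t in_ab by auto
  moreover obtain j where
    "{cls V E lab (W @ alt a b k), cls V E lab (W @ alt a b k @ [t])} = cedge V E lab W a b j"
  proof (cases rule: alt_snoc_cox_eq[OF Eab t, of k])
    case (1 j)
    then show ?thesis
      using that[of j] cong in_ab unfolding cedge_def by (simp del: alt.simps)
  next
    case (2 j)
    then show ?thesis
      using that[of j] cong in_ab unfolding cedge_def by (simp add: insert_commute del: alt.simps)
  qed
  moreover have "j mod (2 * lab a b) < 2 * lab a b"
    using lab_ge_2[OF Eab] by simp
  ultimately show ?thesis
    using cedge_mod[OF W Eab, of j] by metis
qed

lemma cell_of_rebase:
  assumes w: "w \<in> lists V" and W: "W \<in> lists V" and ab: "a \<in> V" "b \<in> V"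
    and u: "u \<in> lists {a, b}" and c: "cox_eq V E lab (w @ u) W" and sc: "{a, b} = {s, c}"
  shows "cell_of V E lab w a b = cell_of V E lab W s c"
proof -
  have uV: "u \<in> lists V"
    using u ab by auto
  have to_W: "cls V E lab (w @ x) = cls V E lab (W @ (rev u @ x))" if x: "x \<in> lists {a, b}" for x
  proof -
    have "cox_eq V E lab (w @ x) (w @ (u @ rev u) @ x)"
      using cox_eq_append[OF cox_eq.sym[OF cox_eq_rev_cancel[OF uV]], where p=w and q=x] by simp
    moreover have "cox_eq V E lab (w @ (u @ rev u) @ x) (W @ (rev u @ x))"
      using cox_eq_append_right[OF c, of "rev u @ x"] by simp
    ultimately have "cox_eq V E lab (w @ x) (W @ (rev u @ x))"
      by (rule cox_eq.trans)
    moreover have "w @ x \<in> lists V" and "W @ (rev u @ x) \<in> lists V"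
      using w W x uV ab by auto
    ultimately show ?thesis
      by (simp add: cls_eq_iff)
  qed
  have to_w: "cls V E lab (W @ y) = cls V E lab (w @ (u @ y))" if y: "y \<in> lists {a, b}" for y
  proof -
    have "cox_eq V E lab (W @ y) (w @ (u @ y))"
      using cox_eq.sym[OF cox_eq_append_right[OF c, of y]] by simp
    moreover have "w @ (u @ y) \<in> lists V" and "W @ y \<in> lists V"
      using w W y uV ab by auto
    ultimately show ?thesis
      by (simp add: cls_eq_iff)
  qed
  have "{cls V E lab (w @ x) | x. x \<in> lists {a, b}} = {cls V E lab (W @ y) | y. y \<in> lists {a, b}}"
  proof (intro set_eqI iffI)
    fix z
    assume "z \<in> {cls V E lab (w @ x) | x. x \<in> lists {a, b}}"
    then obtain x where x: "x \<in> lists {a, b}" and z: "z = cls V E lab (w @ x)"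
      by blast
    have "rev u @ x \<in> lists {a, b}"
      using u x by auto
    then show "z \<in> {cls V E lab (W @ y) | y. y \<in> lists {a, b}}"
      unfolding z to_W[OF x] by blast
  next
    fix z
    assume "z \<in> {cls V E lab (W @ y) | y. y \<in> lists {a, b}}"
    then obtain y where y: "y \<in> lists {a, b}" and z: "z = cls V E lab (W @ y)"
      by blast
    have "u @ y \<in> lists {a, b}"
      using u y by simp
    then show "z \<in> {cls V E lab (w @ x) | x. x \<in> lists {a, b}}"
      unfolding z to_w[OF y] by blast
  qed
  then show ?thesis
    unfolding cell_of_def using sc by simp
qed

lemma cell_edge_cedge:
  assumes W: "W \<in> lists V" and Esa: "E s a" and e: "e \<in> cell_edges V E lab (cell_of V E lab W s a)"
  shows "\<exists>j < 2 * lab s a. e = cedge V E lab W s a j"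
proof -
  obtain w1 a1 b1 k where w1: "w1 \<in> lists V" and E1: "E a1 b1"
    and same_cell: "cell_of V E lab w1 a1 b1 = cell_of V E lab W s a"
    and e1: "e = cedge V E lab w1 a1 b1 k"
    using e unfolding cell_edges_def by blast
  have sa: "s \<in> V" "a \<in> V"
    using E_in_V Esa by auto
  have gens: "{a1, b1} = {s, a}"
    using same_cell unfolding cell_of_def by simp
  have "cls V E lab (w1 @ []) \<in> snd (cell_of V E lab w1 a1 b1)"
    unfolding cell_of_def by (auto intro!: exI[of _ "[]"])
  then obtain u where u: "u \<in> lists {s, a}" and cu: "cls V E lab w1 = cls V E lab (W @ u)"
    unfolding same_cell unfolding cell_of_def by auto
  moreover have "W @ u \<in> lists V"
    using W u sa by auto
  ultimately have "cox_eq V E lab w1 (W @ u)"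
    using cls_eq_iff[OF w1] by blast
  define x where "x = u @ alt a1 b1 k"
  define t where "t = alt_letter a1 b1 k"
  have x: "x \<in> lists {s, a}" and t: "t \<in> {s, a}"
    unfolding x_def t_def using u alt_in_lists[of a1 b1 k] alt_letter_in[of a1 b1 k] gens by auto
  have "cox_eq V E lab (w1 @ alt a1 b1 k @ v) (W @ x @ v)" for v
    using cox_eq_append_right[OF \<open>cox_eq V E lab w1 (W @ u)\<close>, of "alt a1 b1 k @ v"] unfolding x_def by simp
  moreover have "w1 @ alt a1 b1 k @ v \<in> lists V" and "W @ x @ v \<in> lists V" if "v \<in> lists {s, a}" for v
    using w1 alt_in_lists_V[OF E1] W x that sa by auto
  ultimately have "cls V E lab (w1 @ alt a1 b1 k @ v) = cls V E lab (W @ x @ v)" if "v \<in> lists {s, a}" for v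
    using that by (simp add: cls_eq_iff)
  from this[of "[]"] this[of "[t]"] have "e = {cls V E lab (W @ x), cls V E lab (W @ x @ [t])}"
    using e1 t unfolding cedge_def t_def by (simp add: alt_Suc_snoc del: alt.simps)
  then show ?thesis
    using coset_edge_cedge[OF W Esa x t] by simp
qed

lemma sigma_edge_of_cell_edge:
  assumes "e \<in> cell_edges V E lab \<sigma>"
  obtains W s where "W \<in> lists V" "s \<in> V" "e = {cls V E lab W, cls V E lab (W @ [s])}"
proof -
  obtain w a b i where "w \<in> lists V" "E a b" "e = cedge V E lab w a b i"
    using assms unfolding cell_edges_def by blast
  moreover have "alt_letter a b i \<in> V"
    using alt_letter_in[of a b i] E_in_V[OF \<open>E a b\<close>] by auto
  ultimately show ?thesis
    using that[of "w @ alt a b i" "alt_letter a b i"] alt_in_lists_V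
    unfolding cedge_def by (simp add: alt_Suc_snoc del: alt.simps)
qed

lemma cell_through_sigma_edge:
  assumes W: "W \<in> lists V" and s: "s \<in> V"
    and e: "{cls V E lab W, cls V E lab (W @ [s])} \<in> cell_edges V E lab \<tau>"
  obtains c where "E s c" "\<tau> = cell_of V E lab W s c"
proof -
  obtain w c d j where w: "w \<in> lists V" and Ecd: "E c d" and \<tau>: "\<tau> = cell_of V E lab w c d"
    and ej: "{cls V E lab W, cls V E lab (W @ [s])} = cedge V E lab w c d j"
    using e unfolding cell_edges_def by blast
  define q where "q = alt c d j"
  define t where "t = alt_letter c d j"
  have cd: "c \<in> V" "d \<in> V"
    using E_in_V Ecd by auto
  have q: "q \<in> lists {c, d}" "w @ q \<in> lists V"
    unfolding q_def using w alt_in_lists[of c d j] alt_in_lists_V[OF Ecd] by auto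
  have t: "t \<in> {c, d}" "t \<in> V"
    unfolding t_def using alt_letter_in[of c d j] cd by auto
  have "{cls V E lab W, cls V E lab (W @ [s])} = {cls V E lab (w @ q), cls V E lab ((w @ q) @ [t])}"
    using ej unfolding cedge_def q_def t_def by (simp add: alt_Suc_snoc del: alt.simps)
  then have st: "s = t" and "cox_eq V E lab W (w @ q) \<or> cox_eq V E lab W ((w @ q) @ [t])"
    using sigma_edge_eqD[OF W q(2) s t(2)] by auto
  moreover have "q @ [t] \<in> lists {c, d}"
    using q(1) t(1) by auto
  ultimately obtain u where u: "u \<in> lists {c, d}" and cu: "cox_eq V E lab (w @ u) W"
    using q(1) cox_eq.sym[of V E lab W] unfolding append_assoc by blast
  define c' where "c' = (if s = c then d else c)"
  have "{c, d} = {s, c'}"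
    unfolding c'_def using st t(1) by auto
  moreover have "E s c'"
    unfolding c'_def using st t(1) Ecd E_sym[OF Ecd] by auto
  ultimately show ?thesis
    using that cell_of_rebase[OF w W cd u cu] \<tau> by blast
qed

lemma cells_through_common_edge:
  assumes "e \<in> cell_edges V E lab \<sigma>" and "e \<in> cell_edges V E lab \<tau>"
  obtains W s a c where "W \<in> lists V" "E s a" "E s c" "\<sigma> = cell_of V E lab W s a"
    "\<tau> = cell_of V E lab W s c" "e = cedge V E lab W s a 0"
proof -
  obtain W s where W: "W \<in> lists V" "s \<in> V" and e: "e = {cls V E lab W, cls V E lab (W @ [s])}"
    using sigma_edge_of_cell_edge[OF assms(1)] by blast
  moreover obtain a c where "E s a" "\<sigma> = cell_of V E lab W s a" "E s c" "\<tau> = cell_of V E lab W s c"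
    using cell_through_sigma_edge[OF W] assms e by metis
  ultimately show thesis
    using that unfolding cedge_def by simp
qed

subsection \<open>Hypergraphs\<close>

lemma opposite_cedge:
  "W \<in> lists V \<Longrightarrow> E a b \<Longrightarrow> j < 2 * lab a b
    \<Longrightarrow> opposite V E lab (cell_of V E lab W a b) (cedge V E lab W a b j)
          (cedge V E lab W a b ((j + lab a b) mod (2 * lab a b)))"
  unfolding opposite_def by blast

lemma opposite_in_cell_edges:
  assumes "opposite V E lab \<sigma> e f"
  shows "e \<in> cell_edges V E lab \<sigma>" and "f \<in> cell_edges V E lab \<sigma>"
proof -
  obtain w a b i where *: "w \<in> lists V" "E a b" "cell_of V E lab w a b = \<sigma>" "i < 2 * lab a b"
    "e = cedge V E lab w a b i" "f = cedge V E lab w a b ((i + lab a b) mod (2 * lab a b))"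
    using assms unfolding opposite_def by blast
  then have "(i + lab a b) mod (2 * lab a b) < 2 * lab a b"
    by simp
  then show "e \<in> cell_edges V E lab \<sigma>" and "f \<in> cell_edges V E lab \<sigma>"
    unfolding cell_edges_def using * by blast+
qed

lemma opposite_sym: "opposite V E lab \<sigma> e f \<Longrightarrow> opposite V E lab \<sigma> f e"
proof -
  assume "opposite V E lab \<sigma> e f"
  then obtain w a b i where *: "w \<in> lists V" "E a b" "cell_of V E lab w a b = \<sigma>" "i < 2 * lab a b"
    "e = cedge V E lab w a b i" "f = cedge V E lab w a b ((i + lab a b) mod (2 * lab a b))"
    unfolding opposite_def by blast
  define i' where "i' = (i + lab a b) mod (2 * lab a b)"
  have "(i' + lab a b) mod (2 * lab a b) = (i + 2 * lab a b) mod (2 * lab a b)"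
    unfolding i'_def by (simp add: mod_add_left_eq mult_2 add.assoc)
  then have "e = cedge V E lab w a b ((i' + lab a b) mod (2 * lab a b))"
    using *(4,5) by simp
  moreover have "i' < 2 * lab a b"
    using *(4) unfolding i'_def by simp
  ultimately show ?thesis
    unfolding opposite_def using * i'_def by blast
qed

lemma hyp_adj_sym: "hyp_adj V E lab e f \<Longrightarrow> hyp_adj V E lab f e"
  unfolding hyp_adj_def using opposite_sym by blast

definition hyp_comp :: "'v list set set \<Rightarrow> 'v list set set set" where
  "hyp_comp e = {f. (hyp_adj V E lab)\<^sup>*\<^sup>* e f}"

lemma hypergraph_iff: "hypergraph V E lab L \<longleftrightarrow> (\<exists>e \<in> sigma_edges V E lab. L = hyp_comp e)"
  unfolding hypergraph_def hyp_comp_def ..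

lemma hyp_comp_self: "e \<in> hyp_comp e"
  unfolding hyp_comp_def by simp

lemma hyp_comp_adj: "f \<in> hyp_comp e \<Longrightarrow> hyp_adj V E lab f g \<Longrightarrow> g \<in> hyp_comp e"
  unfolding hyp_comp_def by (simp add: rtranclp.rtrancl_into_rtrancl)

lemma hyp_adj_rtranclp_sym: "(hyp_adj V E lab)\<^sup>*\<^sup>* e f \<Longrightarrow> (hyp_adj V E lab)\<^sup>*\<^sup>* f e"
  using sympD[OF symp_rtranclp[OF sympI[OF hyp_adj_sym]]] .

lemma hyp_comp_eq: "f \<in> hyp_comp e \<Longrightarrow> hyp_comp f = hyp_comp e"
  unfolding hyp_comp_def
  by (auto intro: rtranclp_trans dest: hyp_adj_rtranclp_sym)

lemma hyp_comp_meet: "f \<in> hyp_comp e1 \<Longrightarrow> f \<in> hyp_comp e2 \<Longrightarrow> hyp_comp e1 = hyp_comp e2"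
  using hyp_comp_eq by metis

lemma cedge_in_sigma_edges:
  assumes w: "w \<in> lists V" and Eab: "E a b"
  shows "cedge V E lab w a b k \<in> sigma_edges V E lab"
proof -
  have "w @ alt a b k \<in> lists V" and "alt_letter a b k \<in> V"
    using w alt_in_lists_V[OF Eab] alt_letter_in[of a b k] E_in_V[OF Eab] by auto
  moreover have "cedge V E lab w a b k = {cls V E lab (w @ alt a b k), cls V E lab ((w @ alt a b k) @ [alt_letter a b k])}"
    unfolding cedge_def by (simp add: alt_Suc_snoc del: alt.simps)
  ultimately show ?thesis
    unfolding sigma_edges_def by blast
qed

lemma cedge_in_cell_edges:
  "W \<in> lists V \<Longrightarrow> E s a \<Longrightarrow> j < 2 * lab s a
    \<Longrightarrow> cedge V E lab W s a j \<in> cell_edges V E lab (cell_of V E lab W s a)"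
  unfolding cell_edges_def by blast

subsection \<open>Realisations\<close>

lemma segment_pts_cases:
  "p \<in> segment_pts \<sigma> e f
    \<Longrightarrow> p = Mid e \<or> p = Mid f \<or> p = Centre \<sigma> \<or> (\<exists>t. p = Half \<sigma> e t) \<or> (\<exists>t. p = Half \<sigma> f t)"
  unfolding segment_pts_def by blast

lemma realisationE:
  assumes "p \<in> realisation V E lab L"
  obtains \<sigma> e f where "\<sigma> \<in> cells V E lab" "opposite V E lab \<sigma> e f" "e \<in> L" "f \<in> L"
    "p \<in> segment_pts \<sigma> e f"
  using assms unfolding realisation_def by blast

lemma intersects_cell_edge:
  assumes "intersects V E lab L \<sigma>"
  shows "\<exists>e \<in> L. e \<in> cell_edges V E lab \<sigma>"
proof -
  obtain p where p_real: "p \<in> realisation V E lab L" and p_cell: "p \<in> cell_pts V E lab \<sigma>"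
    using assms unfolding intersects_def by blast
  obtain \<sigma>' e f where opp: "opposite V E lab \<sigma>' e f" and ef: "e \<in> L" "f \<in> L"
    and p: "p = Mid e \<or> p = Mid f \<or> p = Centre \<sigma>' \<or> (\<exists>t. p = Half \<sigma>' e t) \<or> (\<exists>t. p = Half \<sigma>' f t)"
    using p_real segment_pts_cases by (metis realisationE)
  have "p = Centre \<sigma> \<or> (\<exists>x. p = Mid x \<and> x \<in> cell_edges V E lab \<sigma>)
      \<or> (\<exists>x t. p = Half \<sigma> x t \<and> x \<in> cell_edges V E lab \<sigma>)"
    using p_cell unfolding cell_pts_def by blast
  then show ?thesis
    using p ef opposite_in_cell_edges[OF opp] by auto
qed

lemma intersects_hyp_comp:
  assumes e: "e \<in> hyp_comp e0" and \<tau>: "\<tau> \<in> cells V E lab" and e\<tau>: "e \<in> cell_edges V E lab \<tau>"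
  shows "intersects V E lab (hyp_comp e0) \<tau>"
proof -
  obtain w a b i where w: "w \<in> lists V" and Eab: "E a b" and \<tau>_eq: "cell_of V E lab w a b = \<tau>"
    and i: "i < 2 * lab a b" and e_eq: "e = cedge V E lab w a b i"
    using e\<tau> unfolding cell_edges_def by blast
  define f where "f = cedge V E lab w a b ((i + lab a b) mod (2 * lab a b))"
  have opp: "opposite V E lab \<tau> e f"
    using opposite_cedge[OF w Eab i] \<tau>_eq e_eq f_def by simp
  then have "f \<in> hyp_comp e0"
    using hyp_comp_adj[OF e] \<tau> unfolding hyp_adj_def by blast
  then have "Mid e \<in> realisation V E lab (hyp_comp e0)"
    unfolding realisation_def segment_pts_def using \<tau> opp e by blast
  moreover have "Mid e \<in> cell_pts V E lab \<tau>"
    unfolding cell_pts_def using e\<tau> by blast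
  ultimately show ?thesis
    unfolding intersects_def by blast
qed

text \<open>The realisations of two edge-disjoint hypergraphs can only meet at the centre of a
  \<open>2\<close>-cell crossed by both.\<close>
lemma realisations_disjoint:
  assumes disj: "L1 \<inter> L2 = {}"
    and no_common_cell: "\<And>c y1 y2. c \<in> cells V E lab \<Longrightarrow> y1 \<in> L1 \<Longrightarrow> y2 \<in> L2
      \<Longrightarrow> y1 \<in> cell_edges V E lab c \<Longrightarrow> y2 \<in> cell_edges V E lab c \<Longrightarrow> False"
  shows "realisation V E lab L1 \<inter> realisation V E lab L2 = {}"
proof (rule ccontr)
  assume "realisation V E lab L1 \<inter> realisation V E lab L2 \<noteq> {}"
  then obtain p where p1: "p \<in> realisation V E lab L1" and p2: "p \<in> realisation V E lab L2"
    by blast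
  obtain c1 e1 f1 where c1: "c1 \<in> cells V E lab" and opp1: "opposite V E lab c1 e1 f1"
    and ef1: "e1 \<in> L1" "f1 \<in> L1" and s1: "p \<in> segment_pts c1 e1 f1"
    using p1 by (rule realisationE)
  obtain c2 e2 f2 where opp2: "opposite V E lab c2 e2 f2"
    and ef2: "e2 \<in> L2" "f2 \<in> L2" and s2: "p \<in> segment_pts c2 e2 f2"
    using p2 by (rule realisationE)
  note s1 = segment_pts_cases[OF s1] and s2 = segment_pts_cases[OF s2]
  show False
  proof (cases p)
    case (Centre c)
    then have "c2 = c1"
      using s1 s2 by auto
    then show False
      using no_common_cell[OF c1 ef1(1) ef2(1)] opposite_in_cell_edges[OF opp1] opposite_in_cell_edges[OF opp2]
      by blast
  qed (use s1 s2 ef1 ef2 disj in auto)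
qed

subsection \<open>Roots along hypergraphs\<close>

lemma dihedral_root_in_edge_roots:
  assumes w: "w \<in> lists V" and Eab: "E a b"
  shows "act w (dihedral_root a b k) \<in> edge_roots (cedge V E lab w a b k)"
proof -
  have "w @ alt a b k \<in> lists V" and "alt_letter a b k \<in> V"
    using w alt_in_lists_V[OF Eab] alt_letter_in[of a b k] E_in_V[OF Eab] by auto
  moreover have "cedge V E lab w a b k
      = {cls V E lab (w @ alt a b k), cls V E lab ((w @ alt a b k) @ [alt_letter a b k])}"
    unfolding cedge_def by (simp add: alt_Suc_snoc del: alt.simps)
  moreover have "act w (dihedral_root a b k) = act (w @ alt a b k) (simple_root (alt_letter a b k))"
    unfolding act_append act_alt_simple_root[OF Eab] ..
  ultimately show ?thesis
    unfolding edge_roots_def by blast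
qed

lemma dihedral_root_add_lab:
  "E a b \<Longrightarrow> dihedral_root a b (j + lab a b) = (\<lambda>x. - dihedral_root a b j x)"
  using cheb_add_m[of "lab a b" "theta a b" j] cheb_add_m[of "lab a b" "theta a b" "Suc j"] theta_props
  by (simp add: dihedral_root_def fun_eq_iff)

lemma dihedral_root_opposite:
  assumes Eab: "E a b" and k: "k < 2 * lab a b"
  shows "eq_up_to_sign (dihedral_root a b k) (dihedral_root a b ((k + lab a b) mod (2 * lab a b)))"
proof (cases "k < lab a b")
  case True
  then show ?thesis
    using dihedral_root_add_lab[OF Eab, of k] by (simp add: eq_up_to_sign_def)
next
  case False
  define j where "j = k - lab a b"
  have "k = j + lab a b" and "(k + lab a b) mod (2 * lab a b) = j"
    using False k unfolding j_def by (simp_all add: mod_if mult_2)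
  then show ?thesis
    using dihedral_root_add_lab[OF Eab, of j] by (simp add: eq_up_to_sign_def)
qed

lemma hyp_adj_edge_roots:
  assumes "hyp_adj V E lab e f"
  obtains b c where "b \<in> edge_roots e" "c \<in> edge_roots f" "eq_up_to_sign b c"
proof -
  obtain \<sigma> where "opposite V E lab \<sigma> e f"
    using assms unfolding hyp_adj_def by blast
  then obtain w a b i where w: "w \<in> lists V" and Eab: "E a b" and i: "i < 2 * lab a b"
    and "e = cedge V E lab w a b i" "f = cedge V E lab w a b ((i + lab a b) mod (2 * lab a b))"
    unfolding opposite_def by blast
  then show ?thesis
    using that dihedral_root_in_edge_roots[OF w Eab]
      eq_up_to_sign_act[OF dihedral_root_opposite[OF Eab i]] by blast
qed

lemma hyp_adj_rtranclp_edge_roots: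
  "(hyp_adj V E lab)\<^sup>*\<^sup>* e f \<Longrightarrow> b \<in> edge_roots e \<Longrightarrow> c \<in> edge_roots f \<Longrightarrow> eq_up_to_sign b c"
proof (induction arbitrary: c rule: rtranclp_induct)
  case base
  then show ?case
    by (rule edge_roots_eq_up_to_sign)
next
  case (step y z)
  obtain b0 c0 where b0: "b0 \<in> edge_roots y" and c0: "c0 \<in> edge_roots z" and "eq_up_to_sign b0 c0"
    using hyp_adj_edge_roots[OF step.hyps(2)] by blast
  then show ?case
    using step.IH[OF step.prems(1) b0] edge_roots_eq_up_to_sign[OF c0 step.prems(2)]
    by (blast intro: eq_up_to_sign_trans)
qed

lemma hyp_comp_edge_roots:
  "f1 \<in> hyp_comp e \<Longrightarrow> f2 \<in> hyp_comp e \<Longrightarrow> b \<in> edge_roots f1 \<Longrightarrow> c \<in> edge_roots f2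
    \<Longrightarrow> eq_up_to_sign b c"
  unfolding hyp_comp_def using hyp_adj_rtranclp_edge_roots rtranclp_trans[OF hyp_adj_rtranclp_sym]
  by (metis mem_Collect_eq)

lemma tits_form_dihedral_root_simple_root:
  assumes "E x y" and "z \<in> V"
  shows "tits_form (dihedral_root x y p) (simple_root z)
    = cheb (theta x y) (Suc p) * form_coeff x z + cheb (theta x y) p * form_coeff y z"
  using E_in_V[OF assms(1)] assms(2)
  unfolding dihedral_root_def tits_form_linear_left by (simp add: tits_form_simple_roots)

lemma tits_form_dihedral_roots:
  assumes Exy: "E x y"
  shows "tits_form (dihedral_root x y p) (dihedral_root x y q) = cos ((real p - real q) * theta x y)"
proof -
  have xy: "x \<in> V" "y \<in> V"
    using E_in_V Exy by auto
  have t: "lab x y \<ge> 2" "theta x y = pi / real (lab x y)"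
    using theta_props[OF Exy] by auto
  have "tits_form (dihedral_root x y p) (dihedral_root x y q)
      = cheb (theta x y) (Suc q) * tits_form (dihedral_root x y p) (simple_root x)
        + cheb (theta x y) q * tits_form (dihedral_root x y p) (simple_root y)"
    unfolding dihedral_root_def[of x y q] tits_form_linear_right ..
  also have "\<dots> = cheb (theta x y) (Suc p) * cheb (theta x y) (Suc q) + cheb (theta x y) p * cheb (theta x y) q
      - cos (theta x y) * (cheb (theta x y) (Suc p) * cheb (theta x y) q + cheb (theta x y) p * cheb (theta x y) (Suc q))"
    unfolding tits_form_dihedral_root_simple_root[OF Exy xy(1)] tits_form_dihedral_root_simple_root[OF Exy xy(2)]
      form_coeff_edge[OF Exy] form_coeff_sym[of y x] form_coeff_edge[OF Exy] form_coeff_self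
    by (simp add: algebra_simps)
  also have "\<dots> = cos ((real p - real q) * theta x y)"
    by (rule cheb_bilinear[OF t])
  finally show ?thesis .
qed

lemma cell_edge_in_hyp_comp_of_far_roots:
  assumes c: "c \<in> cells V E lab" and y1: "y1 \<in> cell_edges V E lab c" and y2: "y2 \<in> cell_edges V E lab c"
    and r1: "r1 \<in> edge_roots y1" and r2: "r2 \<in> edge_roots y2" and far: "\<bar>tits_form r1 r2\<bar> \<ge> 1"
  shows "y2 \<in> hyp_comp y1"
proof -
  obtain g x y where g: "g \<in> lists V" and Exy: "E x y" and c_eq: "c = cell_of V E lab g x y"
    using c unfolding cells_def by blast
  obtain p p' where p: "p < 2 * lab x y" "y1 = cedge V E lab g x y p"
    and p': "p' < 2 * lab x y" "y2 = cedge V E lab g x y p'"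
    using cell_edge_cedge[OF g Exy] y1 y2 c_eq by metis
  have "eq_up_to_sign (act g (dihedral_root x y p)) r1" and "eq_up_to_sign (act g (dihedral_root x y p')) r2"
    using edge_roots_eq_up_to_sign dihedral_root_in_edge_roots[OF g Exy] p(2) p'(2) r1 r2 by blast+
  then have "\<bar>tits_form (act g (dihedral_root x y p)) (act g (dihedral_root x y p'))\<bar> = \<bar>tits_form r1 r2\<bar>"
    by (simp add: eq_up_to_sign_tits_form_abs)
  then have "\<bar>cos ((real p - real p') * (pi / real (lab x y)))\<bar> \<ge> 1"
    using far tits_form_act[OF g] tits_form_dihedral_roots[OF Exy] theta_props[OF Exy] by simp
  then have "p' = p \<or> p' = (p + lab x y) mod (2 * lab x y)"
    using cos_multiple_abs_ge_1 lab_ge_2[OF Exy] p(1) p'(1) by blast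
  moreover have "hyp_adj V E lab y1 (cedge V E lab g x y ((p + lab x y) mod (2 * lab x y)))"
    unfolding hyp_adj_def using opposite_cedge[OF g Exy p(1)] c c_eq p(2) by blast
  ultimately show ?thesis
    using hyp_comp_self[of y1] hyp_comp_adj[OF hyp_comp_self[of y1]] p(2) p'(2) by auto
qed

lemma cell_edge_has_root:
  assumes "y \<in> cell_edges V E lab c"
  obtains r where "r \<in> edge_roots y"
  using assms dihedral_root_in_edge_roots unfolding cell_edges_def by blast

lemma hyp_comp_eq_or_realisations_disjoint:
  assumes b1: "\<beta>1 \<in> edge_roots e1" and b2: "\<beta>2 \<in> edge_roots e2" and far: "\<bar>tits_form \<beta>1 \<beta>2\<bar> \<ge> 1"
  shows "hyp_comp e2 = hyp_comp e1
    \<or> realisation V E lab (hyp_comp e2) \<inter> realisation V E lab (hyp_comp e1) = {}"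
proof (cases "hyp_comp e2 \<inter> hyp_comp e1 = {}")
  case False
  then show ?thesis
    using hyp_comp_meet by blast
next
  case disj: True
  have False if c: "c \<in> cells V E lab" and y2: "y2 \<in> hyp_comp e2" and y1: "y1 \<in> hyp_comp e1"
    and y2c: "y2 \<in> cell_edges V E lab c" and y1c: "y1 \<in> cell_edges V E lab c" for c y1 y2
  proof -
    obtain r1 r2 where r1: "r1 \<in> edge_roots y1" and r2: "r2 \<in> edge_roots y2"
      using cell_edge_has_root y1c y2c by metis
    have "eq_up_to_sign \<beta>1 r1" and "eq_up_to_sign \<beta>2 r2"
      using hyp_comp_edge_roots[OF hyp_comp_self] b1 b2 y1 y2 r1 r2 by blast+
    then have "\<bar>tits_form r1 r2\<bar> \<ge> 1"
      using far eq_up_to_sign_tits_form_abs by metis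
    then have "y2 \<in> hyp_comp y1"
      by (rule cell_edge_in_hyp_comp_of_far_roots[OF c y1c y2c r1 r2])
    then show False
      using hyp_comp_eq[OF y1] y2 disj by blast
  qed
  then show ?thesis
    using realisations_disjoint[OF disj] by blast
qed

subsection \<open>Two adjacent \<open>2\<close>-cells\<close>

lemma dihedral_root_last: "E s c \<Longrightarrow> dihedral_root s c (lab s c - 1) = simple_root c"
  using theta_props[of s c] cheb_m[of "lab s c" "theta s c"] cheb_m_minus_1[of "lab s c" "theta s c"]
  by (simp add: dihedral_root_def fun_eq_iff Suc_diff_Suc numeral_2_eq_2 simple_root_def)

lemma dihedral_root_1:
  "E s c \<Longrightarrow> dihedral_root s c 1 = (\<lambda>x. 2 * cos (theta s c) * simple_root s x + 1 * simple_root c x)"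
  using theta_props[of s c] cheb_1[of "lab s c" "theta s c"] cheb_Suc_Suc[of "theta s c" 0]
  by (simp add: dihedral_root_def numeral_2_eq_2)

text \<open>For \<open>j = m\<^sub>s\<^sub>c - 1\<close> the root is \<open>\<alpha>\<^sub>c\<close>, which works unless \<open>k = m\<^sub>s\<^sub>a - 1\<close> and
  \<open>a, c\<close> are adjacent; then \<open>j = 1\<close> works because all three labels are at least \<open>3\<close>.\<close>
lemma exists_far_dihedral_root:
  assumes Esa: "E s a" and Esc: "E s c" and ac: "a \<noteq> c"
    and no_2: "\<not> (E a c \<and> (lab s a = 2 \<or> lab s c = 2 \<or> lab a c = 2))"
    and k: "1 \<le> k" "k \<le> lab s a - 1"
  obtains j where "j = 1 \<or> j = lab s c - 1" "\<bar>tits_form (dihedral_root s a k) (dihedral_root s c j)\<bar> \<ge> 1"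
proof -
  define t1 where "t1 = theta s a"
  define t2 where "t2 = theta s c"
  define c3 where "c3 = - form_coeff a c"
  have sac: "s \<in> V" "a \<in> V" "c \<in> V"
    using E_in_V Esa Esc by auto
  have m1: "lab s a \<ge> 2" "t1 = pi / real (lab s a)" and m2: "lab s c \<ge> 2" "t2 = pi / real (lab s c)"
    using theta_props[OF Esa] theta_props[OF Esc] t1_def t2_def by auto
  have cos2: "cos t2 \<ge> 0"
    using cos_angle_nonneg[OF m2] .
  have nonadj: "c3 = 1" if "\<not> E a c"
    unfolding c3_def form_coeff_def using ac that by simp
  have adj: "c3 \<ge> 1/2 \<and> cos t1 \<ge> 1/2 \<and> cos t2 \<ge> 1/2" if Eac: "E a c"
  proof -
    have "lab a c \<ge> 3" "lab s a \<ge> 3" "lab s c \<ge> 3"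
      using no_2 Eac m1 m2 lab_ge_2[OF Eac] by auto
    moreover have "c3 = cos (theta a c)"
      unfolding c3_def using form_coeff_edge[OF Eac] by simp
    ultimately show ?thesis
      using cos_angle_ge_half theta_props[OF Eac] m1 m2 by auto
  qed
  have c3: "c3 \<ge> 0"
    using nonadj adj by force
  have B_c: "tits_form (dihedral_root s a k) (simple_root c) = - (cos t2 * cheb t1 (Suc k) + c3 * cheb t1 k)"
    unfolding tits_form_dihedral_root_simple_root[OF Esa sac(3)] form_coeff_edge[OF Esc] c3_def t1_def t2_def
    by simp
  have B_s: "tits_form (dihedral_root s a k) (simple_root s) = cheb t1 (Suc k) - cos t1 * cheb t1 k"
    unfolding tits_form_dihedral_root_simple_root[OF Esa sac(1)] form_coeff_sym[of a s]
      form_coeff_edge[OF Esa] form_coeff_self t1_def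
    by simp
  have last: "\<bar>tits_form (dihedral_root s a k) (dihedral_root s c (lab s c - 1))\<bar> \<ge> 1 \<Longrightarrow> thesis"
    using that by blast
  show thesis
  proof (cases "k \<le> lab s a - 2")
    case True
    have "cheb t1 k \<ge> 1" "cheb t1 (Suc k) \<ge> 1"
      using cheb_ge_1[OF m1] k True by auto
    then have "cos t2 * cheb t1 (Suc k) + c3 * cheb t1 k \<ge> cos t2 + c3"
      using cos2 c3 by (smt (verit) mult_le_cancel_left1)
    moreover have "cos t2 + c3 \<ge> 1"
      using nonadj adj cos2 by force
    ultimately show thesis
      using last B_c dihedral_root_last[OF Esc] by simp
  next
    case False
    then have "k = lab s a - 1"
      using k by simp
    then have U: "cheb t1 k = 1" "cheb t1 (Suc k) = 0"
      using cheb_m_minus_1[OF m1] cheb_m[OF m1] m1(1) by auto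
    show thesis
    proof (cases "E a c")
      case False
      then show thesis
        using last B_c U nonadj dihedral_root_last[OF Esc] by simp
    next
      case True
      have "tits_form (dihedral_root s a k) (dihedral_root s c 1) = - (2 * cos t1 * cos t2 + c3)"
        unfolding dihedral_root_1[OF Esc] tits_form_linear_right B_s B_c U t2_def by simp
      moreover have "cos t1 * cos t2 \<ge> 1/2 * (1/2)"
        using adj[OF True] by (intro mult_mono) auto
      ultimately show thesis
        using that[of 1] adj[OF True] by simp
    qed
  qed
qed

lemma hyp_comp_crossing_index:
  assumes W: "W \<in> lists V" and Esa: "E s a"
    and e1: "e1 \<in> hyp_comp e" "e1 \<in> cell_edges V E lab (cell_of V E lab W s a)"
    and e0: "cedge V E lab W s a 0 \<notin> hyp_comp e"
  obtains k where "1 \<le> k" "k \<le> lab s a - 1" "cedge V E lab W s a k \<in> hyp_comp e"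
proof -
  define m where "m = lab s a"
  obtain k0 where k0: "k0 < 2 * m" and e1_eq: "e1 = cedge V E lab W s a k0"
    using cell_edge_cedge[OF W Esa e1(2)] m_def by blast
  have opp_in: "cedge V E lab W s a ((k0 + m) mod (2 * m)) \<in> hyp_comp e"
    using hyp_comp_adj[OF e1(1)] opposite_cedge[OF W Esa] k0 cells_def W Esa
    unfolding hyp_adj_def e1_eq m_def by blast
  have "k0 \<noteq> 0"
  proof
    assume "k0 = 0"
    then show False
      using e0 e1(1) e1_eq by simp
  qed
  moreover have "k0 \<noteq> m"
  proof
    assume "k0 = m"
    then have "(k0 + m) mod (2 * m) = 0"
      by (simp add: mult_2)
    then show False
      using e0 opp_in by simp
  qed
  ultimately show thesis
  proof (cases "k0 < m")
    case True
    then show thesis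
      using that[of k0] \<open>k0 \<noteq> 0\<close> e1 e1_eq m_def by auto
  next
    case False
    then have "(k0 + m) mod (2 * m) = k0 - m"
      using k0 by (simp add: mod_if mult_2)
    then show thesis
      using that[of "k0 - m"] False k0 \<open>k0 \<noteq> m\<close> opp_in m_def by auto
  qed
qed

lemma adjacent_cell_hypergraph:
  assumes no_2_triangle: "\<not> (\<exists>a b c. E a b \<and> E b c \<and> E a c \<and> (lab a b = 2 \<or> lab b c = 2 \<or> lab a c = 2))"
    and W: "W \<in> lists V" and Esa: "E s a" and Esc: "E s c" and ac: "a \<noteq> c"
    and k: "1 \<le> k" "k \<le> lab s a - 1" and e_k: "cedge V E lab W s a k \<in> hyp_comp e"
  obtains f where "f \<in> sigma_edges V E lab" "f \<in> cell_edges V E lab (cell_of V E lab W s c)"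
    "hyp_comp f = hyp_comp e \<or> realisation V E lab (hyp_comp f) \<inter> realisation V E lab (hyp_comp e) = {}"
proof -
  have "\<not> (E a c \<and> (lab s a = 2 \<or> lab s c = 2 \<or> lab a c = 2))"
    using no_2_triangle E_sym[OF Esa] Esc lab_sym[OF Esa] by metis
  then obtain j where j: "j = 1 \<or> j = lab s c - 1"
    and far: "\<bar>tits_form (act W (dihedral_root s a k)) (act W (dihedral_root s c j))\<bar> \<ge> 1"
    using exists_far_dihedral_root[OF Esa Esc ac _ k] tits_form_act[OF W] by metis
  have "j < 2 * lab s c"
    using j lab_ge_2[OF Esc] by auto
  then show thesis
    using that[of "cedge V E lab W s c j"] cedge_in_sigma_edges[OF W Esc] cedge_in_cell_edges[OF W Esc]
      hyp_comp_eq[OF e_k] hyp_comp_eq_or_realisations_disjoint[OF dihedral_root_in_edge_roots[OF W Esa]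
        dihedral_root_in_edge_roots[OF W Esc] far]
    by metis
qed

end

theorem lemmaA4:
  fixes V :: "'v set" and E :: "'v \<Rightarrow> 'v \<Rightarrow> bool" and lab :: "'v \<Rightarrow> 'v \<Rightarrow> nat"
  assumes "labelled_graph V E lab"
    and "\<not> (\<exists>a b c. E a b \<and> E b c \<and> E a c \<and> (lab a b = 2 \<or> lab b c = 2 \<or> lab a c = 2))"
    and "\<sigma> \<in> cells V E lab" and "\<tau> \<in> cells V E lab"
    and "cell_edges V E lab \<sigma> \<inter> cell_edges V E lab \<tau> \<noteq> {}"
    and "hypergraph V E lab \<Lambda>\<sigma>" and "intersects V E lab \<Lambda>\<sigma> \<sigma>"
  shows "\<exists>\<Lambda>\<tau>. hypergraph V E lab \<Lambda>\<tau> \<and> intersects V E lab \<Lambda>\<tau> \<tau>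
           \<and> (realisation V E lab \<Lambda>\<tau> \<inter> realisation V E lab \<Lambda>\<sigma> = {} \<or> \<Lambda>\<tau> = \<Lambda>\<sigma>)"
proof -
  interpret coxeter_graph V E lab
    by (rule coxeter_graph.intro) (fact assms(1))
  obtain e where \<Lambda>\<sigma>: "\<Lambda>\<sigma> = hyp_comp e"
    using assms(6) hypergraph_iff by blast
  show ?thesis
  proof (cases "\<exists>f \<in> \<Lambda>\<sigma>. f \<in> cell_edges V E lab \<tau>")
    case True
    then show ?thesis
      using intersects_hyp_comp assms(4,6) \<Lambda>\<sigma> by blast
  next
    case False
    obtain e0 where e0: "e0 \<in> cell_edges V E lab \<sigma>" "e0 \<in> cell_edges V E lab \<tau>"
      using assms(5) by blast
    then obtain W s a c where W: "W \<in> lists V" and Esa: "E s a" "\<sigma> = cell_of V E lab W s a"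
      and Esc: "E s c" "\<tau> = cell_of V E lab W s c" and e0_eq: "e0 = cedge V E lab W s a 0"
      by (rule cells_through_common_edge)
    obtain e1 where e1: "e1 \<in> \<Lambda>\<sigma>" "e1 \<in> cell_edges V E lab \<sigma>"
      using intersects_cell_edge[OF assms(7)] by blast
    then have "a \<noteq> c"
      using False Esa Esc by auto
    moreover obtain k where "1 \<le> k" "k \<le> lab s a - 1" "cedge V E lab W s a k \<in> \<Lambda>\<sigma>"
      using hyp_comp_crossing_index[OF W Esa(1), of e1 e] e1 Esa(2) \<Lambda>\<sigma> False e0(2) e0_eq by blast
    ultimately obtain f where "f \<in> sigma_edges V E lab" "f \<in> cell_edges V E lab \<tau>"
      "hyp_comp f = \<Lambda>\<sigma> \<or> realisation V E lab (hyp_comp f) \<inter> realisation V E lab \<Lambda>\<sigma> = {}"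
      using adjacent_cell_hypergraph[OF assms(2) W Esa(1) Esc(1)] Esc(2) \<Lambda>\<sigma> by metis
    then show ?thesis
      using hypergraph_iff intersects_hyp_comp[OF hyp_comp_self assms(4)] by blast
  qed
qed

end
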